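(* Let $\mathcal{S}_1,\dots,\mathcal{S}_n\subseteq\mathbb{R}^D$ be independent linear subspaces (i.e. $\sum_{\ell=1}^n d_\ell=\dim(\sum_\ell\mathcal{S}_\ell)$, $d_\ell=\dim\mathcal{S}_\ell$), and let $\mathcal{X}=\{\boldsymbol{x}_1,\dots,\boldsymbol{x}_N\}\subseteq\bigcup_\ell\mathcal{S}_\ell$ consist of unit-norm vectors such that each $\mathcal{S}_\ell$ contains at least $d_\ell$ points of $\mathcal{X}$ spanning $\mathcal{S}_\ell$. Let $k\ge\sum_\ell d_\ell$ and $t>0$ an integer. Run the following procedure with $\lambda=\infty$: (1) compute $\mathcal{X}_0=\mathcal{X}_0^{(k)}$ by farthest first search ($\mathcal{X}_0^{(1)}=\{\boldsymbol{x}_j\}$ for an arbitrary $j$; for $i=1,\dots,k-1$, $\mathcal{X}_0^{(i+1)}=\mathcal{X}_0^{(i)}\cup\{\boldsymbol{x}\}$ with $\boldsymbol{x}\in\arg\max_{\boldsymbol{x}_j\in\mathcal{X}}f_\infty(\boldsymbol{x}_j,\mathcal{X}_0^{(i)})$), and for each $j$ let $\boldsymbol{c}_j$ be an optimal solution of $\min_{\boldsymbol{c}\in\mathbb{R}^N}\|\boldsymbol{c}\|_1$ s.t. $\boldsymbol{x}_j=\sum_{i:\boldsymbol{x}_i\in\mathcal{X}_0}c_i\boldsymbol{x}_i$; (2) set $\tilde{\boldsymbol{c}}_j=\boldsymbol{c}_j/\|\boldsymbol{c}_j\|_2$ and, for all $i,j$, $W_{ij}=1$ if $\tilde{\boldsymbol{c}}_j$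 is one of the $t$ nearest neighbors of $\tilde{\boldsymbol{c}}_i$ (largest inner products with $\tilde{\boldsymbol{c}}_i$) and $\langle\tilde{\boldsymbol{c}}_j,\tilde{\boldsymbol{c}}_i\rangle>0$, and $W_{ij}=0$ otherwise; (3) set $\mathbf{A}=\mathbf{W}+\mathbf{W}^\top$. Then $\mathbf{A}$ has no wrong connections: $A_{ij}\neq0$ only if $\boldsymbol{x}_i$ and $\boldsymbol{x}_j$ lie in the same subspace.
   Context: $f_\infty(\boldsymbol{x}_j,\mathcal{X}_0):=\min_{\boldsymbol{c}\in\mathbb{R}^N}\|\boldsymbol{c}\|_1$ subject to $\boldsymbol{x}_j=\sum_{i:\boldsymbol{x}_i\in\mathcal{X}_0}c_i\boldsymbol{x}_i$, with value $\infty$ if infeasible. *)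

theory Defs
  imports "HOL-Analysis.Analysis" "HOL-Library.Extended_Real"
begin

text \<open>Data points are indexed by a finite type 'm (so N = CARD('m)); coefficient
vectors c live in real^'m (i.e. R^N).  A subset X0 of the data is represented
by the set of its indices.\<close>

definition l1norm :: "real^'m::finite \<Rightarrow> real" where
  "l1norm c = (\<Sum>i\<in>UNIV. \<bar>c $ i\<bar>)"

text \<open>f_infinity(x_j, X0): minimal l1 norm of a representation of x_j by the
points of X0; infinity (Inf of the empty set of ereals) if infeasible.\<close>
definition f_inf :: "('m::finite \<Rightarrow> 'a::real_vector) \<Rightarrow> 'm \<Rightarrow> 'm set \<Rightarrow> ereal" where
  "f_inf x j X0 = Inf {ereal (l1norm c) | c. x j = (\<Sum>i\<in>X0. (c $ i) *\<^sub>R x i)}"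

definition ffs_run :: "('m::finite \<Rightarrow> 'a::real_vector) \<Rightarrow> nat \<Rightarrow> (nat \<Rightarrow> 'm set) \<Rightarrow> bool" where
  "ffs_run x k X0 \<longleftrightarrow>
     (\<exists>j. X0 1 = {j}) \<and>
     (\<forall>i. 1 \<le> i \<and> i < k \<longrightarrow>
        (\<exists>p. X0 (Suc i) = insert p (X0 i) \<and> (\<forall>q. f_inf x q (X0 i) \<le> f_inf x p (X0 i))))"

definition optimal_coef :: "('m::finite \<Rightarrow> 'a::real_vector) \<Rightarrow> 'm set \<Rightarrow> 'm \<Rightarrow> real^'m \<Rightarrow> bool" where
  "optimal_coef x X0 j c \<longleftrightarrow>
     x j = (\<Sum>i\<in>X0. (c $ i) *\<^sub>R x i) \<and> ereal (l1norm c) = f_inf x j X0"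

text \<open>NN is a set of t nearest neighbours of ct i (largest inner products with
ct i), ties broken arbitrarily; if t exceeds N all points are neighbours.\<close>
definition is_tNN :: "('m::finite \<Rightarrow> real^'m) \<Rightarrow> nat \<Rightarrow> 'm \<Rightarrow> 'm set \<Rightarrow> bool" where
  "is_tNN ct t i NN \<longleftrightarrow>
     card NN = min t CARD('m) \<and>
     (\<forall>j\<in>NN. \<forall>j'. j' \<notin> NN \<longrightarrow> inner (ct j') (ct i) \<le> inner (ct j) (ct i))"

definition knn_W :: "('m::finite \<Rightarrow> real^'m) \<Rightarrow> ('m \<Rightarrow> 'm set) \<Rightarrow> 'm \<Rightarrow> 'm \<Rightarrow> real" where
  "knn_W ct NN i j = (if j \<in> NN i \<and> inner (ct j) (ct i) > 0 then 1 else 0)"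

end

theory Submission
  imports Defs
begin

text \<open>Independence of the subspaces means that each \<open>S l\<close> meets the span of the
others only in \<open>0\<close>. With \<open>\<lambda> = \<infinity>\<close>, the points maximising \<open>f_inf\<close> are exactly the
points outside the span of the current selection, as long as there are any; so farthest
first search raises the dimension of the selection in every step until it spans all
data, which happens within \<open>\<Sum> d\<^sub>l \<le> k\<close> steps. Then every \<open>l\<^sub>1\<close> problem is feasible and,
by compactness, has an optimal solution. In a representation of \<open>x j\<close>, the part
carried by points outside the subspace of \<open>x j\<close> lies both in that subspace and in
the span of the others, hence vanishes; dropping it does not increase the \<open>l\<^sub>1\<close> norm, so
an optimal \<open>c\<^sub>j\<close> is supported on points of the subspace of \<open>x j\<close>. Two coefficient
vectors with positive inner product share a support point, a nonzero vector lying
in both subspaces, so the subspaces coincide.\<close>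

lemma dim_Un_le: "dim (A \<union> (B::'a::euclidean_space set)) \<le> dim A + dim B"
proof -
  have "dim (A \<union> B) = dim {x + y |x y. x \<in> span A \<and> y \<in> span B}"
    by (simp flip: span_Un)
  also have "\<dots> \<le> dim (span A) + dim (span B)"
    using dim_sums_Int[of "span A" "span B"] by simp
  finally show ?thesis by simp
qed

lemma dim_UN_le:
  fixes S :: "'l \<Rightarrow> 'a::euclidean_space set"
  assumes "finite L"
  shows "dim (\<Union>l\<in>L. S l) \<le> (\<Sum>l\<in>L. dim (S l))"
  using assms
proof (induction L rule: finite_induct)
  case (insert a L)
  have "dim (\<Union>l\<in>insert a L. S l) \<le> dim (S a) + dim (\<Union>l\<in>L. S l)"
    using dim_Un_le by simp
  with insert show ?case by simp
qed simp

lemma independent_subspaces_Int_span_others: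
  fixes S :: "'l \<Rightarrow> 'a::euclidean_space set"
  assumes "finite L" "l \<in> L" "subspace (S l)"
    and indep: "(\<Sum>l\<in>L. dim (S l)) = dim (span (\<Union>l\<in>L. S l))"
  shows "S l \<inter> span (\<Union>l'\<in>L - {l}. S l') \<subseteq> {0}"
proof -
  define V where "V = span (\<Union>l'\<in>L - {l}. S l')"
  have union_split: "(\<Union>l\<in>L. S l) = S l \<union> (\<Union>l'\<in>L - {l}. S l')"
    using \<open>l \<in> L\<close> by blast
  have span_S: "span (S l) = S l"
    using \<open>subspace (S l)\<close> by (rule span_eq_iff[THEN iffD2])
  have "(\<Sum>l\<in>L. dim (S l)) = dim {u + v |u v. u \<in> S l \<and> v \<in> V}"
    using indep unfolding union_split span_Un span_S V_def .
  moreover have "dim V \<le> (\<Sum>l'\<in>L - {l}. dim (S l'))"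
    unfolding V_def using dim_UN_le[of "L - {l}" S] \<open>finite L\<close> by simp
  moreover have "(\<Sum>l\<in>L. dim (S l)) = dim (S l) + (\<Sum>l'\<in>L - {l}. dim (S l'))"
    using \<open>finite L\<close> \<open>l \<in> L\<close> by (simp add: sum.remove)
  moreover have "dim {u + v |u v. u \<in> S l \<and> v \<in> V} + dim (S l \<inter> V) = dim (S l) + dim V"
    using dim_sums_Int[OF \<open>subspace (S l)\<close>] by (simp add: V_def)
  ultimately have "dim (S l \<inter> V) = 0"
    by linarith
  then show ?thesis
    by (simp add: V_def)
qed

lemma in_span_image_iff_coefficients:
  fixes x :: "'m::finite \<Rightarrow> 'a::real_vector"
  shows "v \<in> span (x ` X) \<longleftrightarrow> (\<exists>c::real^'m. v = (\<Sum>i\<in>X. (c $ i) *\<^sub>R x i))"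
proof
  let ?R = "{v. \<exists>c::real^'m. v = (\<Sum>i\<in>X. (c $ i) *\<^sub>R x i)}"
  have "subspace ?R"
    unfolding subspace_def
  proof (intro conjI ballI allI)
    show "0 \<in> ?R"
      by (rule CollectI, rule exI[of _ 0]) simp
    fix u w assume "u \<in> ?R" "w \<in> ?R"
    then obtain c d where "u = (\<Sum>i\<in>X. (c $ i) *\<^sub>R x i)" "w = (\<Sum>i\<in>X. (d $ i) *\<^sub>R x i)"
      by blast
    then show "u + w \<in> ?R"
      by (intro CollectI exI[of _ "c + d"]) (simp add: scaleR_add_left sum.distrib)
  next
    fix r u assume "u \<in> ?R"
    then obtain c where "u = (\<Sum>i\<in>X. (c $ i) *\<^sub>R x i)"
      by blast
    then show "r *\<^sub>R u \<in> ?R"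
      by (intro CollectI exI[of _ "r *\<^sub>R c"]) (simp add: scaleR_sum_right)
  qed
  moreover have "x ` X \<subseteq> ?R"
  proof
    fix v assume "v \<in> x ` X"
    then obtain j where "j \<in> X" "v = x j"
      by blast
    then have "v = (\<Sum>i\<in>X. ((\<chi> i. if i = j then 1 else 0) $ i) *\<^sub>R x i)"
      by (simp add: if_distrib[of "\<lambda>r. r *\<^sub>R _"] cong: if_cong)
    then show "v \<in> ?R"
      by blast
  qed
  moreover assume "v \<in> span (x ` X)"
  ultimately show "\<exists>c::real^'m. v = (\<Sum>i\<in>X. (c $ i) *\<^sub>R x i)"
    using span_minimal by blast
next
  assume "\<exists>c::real^'m. v = (\<Sum>i\<in>X. (c $ i) *\<^sub>R x i)"
  then obtain c :: "real^'m" where c: "v = (\<Sum>i\<in>X. (c $ i) *\<^sub>R x i)"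
    by blast
  show "v \<in> span (x ` X)"
    unfolding c by (intro span_sum span_scale span_base) auto
qed

lemma f_inf_le_l1norm:
  "x q = (\<Sum>i\<in>X. (c $ i) *\<^sub>R x i) \<Longrightarrow> f_inf x q X \<le> ereal (l1norm c)"
  unfolding f_inf_def by (rule Inf_lower) blast

lemma f_inf_eq_infinity_iff:
  fixes x :: "'m::finite \<Rightarrow> 'a::real_vector"
  shows "f_inf x q X = \<infinity> \<longleftrightarrow> x q \<notin> span (x ` X)"
proof (cases "x q \<in> span (x ` X)")
  case True
  then obtain c :: "real^'m" where "x q = (\<Sum>i\<in>X. (c $ i) *\<^sub>R x i)"
    by (auto simp: in_span_image_iff_coefficients)
  then have "f_inf x q X \<le> ereal (l1norm c)"
    by (rule f_inf_le_l1norm)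
  with True show ?thesis
    by auto
next
  case False
  then show ?thesis
    by (simp add: f_inf_def in_span_image_iff_coefficients flip: top_ereal_def)
qed

lemma continuous_on_l1norm: "continuous_on A (l1norm :: real^'m::finite \<Rightarrow> real)"
  unfolding l1norm_def[abs_def] by (intro continuous_intros)

lemma optimal_coef_exists:
  fixes x :: "'m::finite \<Rightarrow> 'a::real_normed_vector"
  assumes "x q \<in> span (x ` X)"
  shows "\<exists>c. optimal_coef x X q c"
proof -
  define F where "F = {c::real^'m. x q = (\<Sum>i\<in>X. (c $ i) *\<^sub>R x i)}"
  obtain c0 where "c0 \<in> F"
    using assms by (auto simp: F_def in_span_image_iff_coefficients)
  define K where "K = F \<inter> {c. l1norm c \<le> l1norm c0}"
  have "closed F"
    unfolding F_def by (intro closed_Collect_eq continuous_intros)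
  then have "closed K"
    unfolding K_def by (intro closed_Int closed_Collect_le continuous_on_l1norm continuous_intros)
  moreover have "K \<subseteq> cball 0 (l1norm c0)"
    unfolding K_def l1norm_def by (auto simp: dist_norm intro: order_trans[OF norm_le_l1_cart])
  ultimately have "compact K"
    by (meson bounded_cball bounded_subset compact_eq_bounded_closed)
  moreover have "c0 \<in> K"
    using \<open>c0 \<in> F\<close> by (simp add: K_def)
  ultimately obtain c where "c \<in> K" and min: "\<forall>d\<in>K. l1norm c \<le> l1norm d"
    using continuous_attains_inf[of K l1norm] continuous_on_l1norm by blast
  then have "c \<in> F" and "\<forall>d\<in>F. l1norm c \<le> l1norm d"
    unfolding K_def by force+
  then have "ereal (l1norm c) = f_inf x q X"
    unfolding F_def f_inf_def by (auto intro!: antisym Inf_greatest Inf_lower)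
  with \<open>c \<in> F\<close> show ?thesis
    unfolding optimal_coef_def F_def by blast
qed

lemma ffs_run_dim_grows:
  fixes x :: "'m::finite \<Rightarrow> 'a::euclidean_space"
  assumes run: "ffs_run x k X0" and nz: "\<forall>j. x j \<noteq> 0" and "1 \<le> i" "i \<le> k"
  shows "range x \<subseteq> span (x ` X0 i) \<or> i \<le> dim (x ` X0 i)"
  using assms(3,4)
proof (induction i rule: nat_induct_at_least)
  case base
  obtain j where "X0 1 = {j}"
    using run unfolding ffs_run_def by blast
  with nz show ?case
    by (simp add: dim_insert)
next
  case (Suc i)
  obtain p where p: "X0 (Suc i) = insert p (X0 i)"
    and p_max: "\<forall>q. f_inf x q (X0 i) \<le> f_inf x p (X0 i)"
    using run Suc.hyps Suc.prems unfolding ffs_run_def by auto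
  show ?case
  proof (cases "range x \<subseteq> span (x ` X0 i)")
    case True
    moreover have "span (x ` X0 i) \<subseteq> span (x ` X0 (Suc i))"
      using p by (intro span_mono) auto
    ultimately show ?thesis
      by blast
  next
    case False
    then obtain q where "x q \<notin> span (x ` X0 i)"
      by blast
    then have "x p \<notin> span (x ` X0 i)"
      using p_max[rule_format, of q] by (simp add: f_inf_eq_infinity_iff[symmetric])
    then have "dim (x ` X0 (Suc i)) = Suc (dim (x ` X0 i))"
      using p by (simp add: dim_insert)
    with Suc.IH Suc.prems False show ?thesis
      by simp
  qed
qed

lemma ffs_run_spans_data:
  fixes x :: "'m::finite \<Rightarrow> 'a::euclidean_space"
  assumes run: "ffs_run x k X0" and nz: "\<forall>j. x j \<noteq> 0" and k: "dim (range x) \<le> k"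
  shows "range x \<subseteq> span (x ` X0 k)"
proof -
  obtain j :: 'm where True
    by blast
  have "1 \<le> dim (range x)"
    using dim_subset[of "{x j}" "range x"] nz by (simp add: dim_insert)
  then have grows: "range x \<subseteq> span (x ` X0 k) \<or> k \<le> dim (x ` X0 k)"
    using ffs_run_dim_grows[OF run nz] k by simp
  show ?thesis
  proof (cases "k \<le> dim (x ` X0 k)")
    case True
    then have "span (x ` X0 k) = span (range x)"
      using k by (intro dim_eq_span) auto
    then show ?thesis
      by (simp add: span_superset)
  next
    case False
    with grows show ?thesis
      by simp
  qed
qed

lemma sum_in_complementary_subspace:
  fixes f :: "'i \<Rightarrow> 'a::real_vector"
  assumes "subspace U" "subspace V" "U \<inter> V \<subseteq> {0}" "finite X"
    and "(\<Sum>i\<in>X. f i) \<in> U" "\<forall>i\<in>X \<inter> A. f i \<in> U" "\<forall>i\<in>X - A. f i \<in> V"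
  shows "(\<Sum>i\<in>X. f i) = (\<Sum>i\<in>X \<inter> A. f i)"
proof -
  have split: "(\<Sum>i\<in>X. f i) = (\<Sum>i\<in>X \<inter> A. f i) + (\<Sum>i\<in>X - A. f i)"
    using \<open>finite X\<close> by (rule sum.Int_Diff)
  have "(\<Sum>i\<in>X - A. f i) \<in> V"
    using assms(2,7) by (intro subspace_sum) auto
  moreover have "(\<Sum>i\<in>X - A. f i) \<in> U"
    using split subspace_diff[OF \<open>subspace U\<close> assms(5) subspace_sum[OF \<open>subspace U\<close>]] assms(6)
    by (metis add_diff_cancel_left')
  ultimately show ?thesis
    using split assms(3) by auto
qed

lemma optimal_coef_support_within:
  assumes opt: "optimal_coef x X j c"
    and restr: "x j = (\<Sum>i\<in>X \<inter> A. (c $ i) *\<^sub>R x i)"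
    and "c $ p \<noteq> 0"
  shows "p \<in> A"
proof -
  define c' where "c' = (\<chi> i. if i \<in> A then c $ i else 0)"
  define r where "r = (\<Sum>i\<in>UNIV. if i \<in> A then 0 else \<bar>c $ i\<bar>)"
  have "x j = (\<Sum>i\<in>X. (c' $ i) *\<^sub>R x i)"
    unfolding restr c'_def
    by (simp add: if_distrib[of "\<lambda>r. r *\<^sub>R _"] sum.inter_restrict cong: if_cong)
  then have "f_inf x j X \<le> ereal (l1norm c')"
    by (rule f_inf_le_l1norm)
  then have "l1norm c \<le> l1norm c'"
    using opt unfolding optimal_coef_def by (metis ereal_less_eq(3))
  moreover have "l1norm c = l1norm c' + r"
  proof -
    have "l1norm c = (\<Sum>i\<in>UNIV. \<bar>c' $ i\<bar> + (if i \<in> A then 0 else \<bar>c $ i\<bar>))"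
      unfolding l1norm_def c'_def by (intro sum.cong) auto
    then show ?thesis
      unfolding r_def l1norm_def by (simp add: sum.distrib)
  qed
  moreover have "0 \<le> r"
    unfolding r_def by (intro sum_nonneg) auto
  ultimately have "r = 0"
    by linarith
  then have "(if p \<in> A then 0 else \<bar>c $ p\<bar>) = 0"
    unfolding r_def by (subst (asm) sum_nonneg_eq_0_iff) auto
  with \<open>c $ p \<noteq> 0\<close> show ?thesis
    by (auto split: if_splits)
qed

lemma optimal_coef_support_in_subspace:
  fixes x :: "'m::finite \<Rightarrow> 'a::real_vector"
  assumes U: "subspace U" and V: "subspace V" and "U \<inter> V \<subseteq> {0}"
    and "x j \<in> U" and U_or_V: "\<And>i. x i \<in> U \<or> x i \<in> V"
    and opt: "optimal_coef x X j c" and "c $ p \<noteq> 0"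
  shows "x p \<in> U"
proof -
  define A where "A = {i. x i \<in> U}"
  have in_U: "\<forall>i\<in>X \<inter> A. (c $ i) *\<^sub>R x i \<in> U"
    unfolding A_def using U by (simp add: subspace_scale)
  have in_V: "\<forall>i\<in>X - A. (c $ i) *\<^sub>R x i \<in> V"
    unfolding A_def using V U_or_V by (metis DiffD2 mem_Collect_eq subspace_scale)
  have "x j = (\<Sum>i\<in>X. (c $ i) *\<^sub>R x i)"
    using opt unfolding optimal_coef_def by simp
  also have "\<dots> = (\<Sum>i\<in>X \<inter> A. (c $ i) *\<^sub>R x i)"
    using U V \<open>U \<inter> V \<subseteq> {0}\<close> \<open>x j \<in> U\<close> \<open>x j = _\<close> in_U in_V
    by (intro sum_in_complementary_subspace) auto
  finally have "p \<in> A"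
    using optimal_coef_support_within[OF opt _ \<open>c $ p \<noteq> 0\<close>] by blast
  then show ?thesis
    by (simp add: A_def)
qed

lemma independent_subspaces_Int_eq_0:
  fixes S :: "'l::finite \<Rightarrow> 'a::euclidean_space set"
  assumes subsp: "\<And>l. subspace (S l)"
    and indep: "(\<Sum>l\<in>UNIV. dim (S l)) = dim (span (\<Union>l. S l))"
    and "v \<in> S l" "v \<in> S l'" "l' \<noteq> l"
  shows "v = 0"
proof -
  have "v \<in> (\<Union>l'\<in>UNIV - {l}. S l')"
    using assms(4,5) by blast
  then have "v \<in> span (\<Union>l'\<in>UNIV - {l}. S l')"
    by (rule span_base)
  moreover have "S l \<inter> span (\<Union>l'\<in>UNIV - {l}. S l') \<subseteq> {0}"
    using subsp indep by (intro independent_subspaces_Int_span_others) auto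
  ultimately show ?thesis
    using \<open>v \<in> S l\<close> by blast
qed

lemma independent_subspaces_optimal_coef_support:
  fixes S :: "'l::finite \<Rightarrow> 'a::euclidean_space set" and x :: "'m::finite \<Rightarrow> 'a"
  assumes subsp: "\<And>l. subspace (S l)"
    and indep: "(\<Sum>l\<in>UNIV. dim (S l)) = dim (span (\<Union>l. S l))"
    and covered: "\<And>i. \<exists>l. x i \<in> S l"
    and "x j \<in> S l" "optimal_coef x X j c" "c $ p \<noteq> 0"
  shows "x p \<in> S l"
proof -
  define V where "V = span (\<Union>l'\<in>UNIV - {l}. S l')"
  have "S l \<inter> V \<subseteq> {0}"
    unfolding V_def using subsp indep by (intro independent_subspaces_Int_span_others) auto
  moreover have "x i \<in> S l \<or> x i \<in> V" for i
  proof -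
    obtain l' where "x i \<in> S l'"
      using covered by blast
    moreover have "x i \<in> V" if "x i \<in> S l'" "l' \<noteq> l"
    proof -
      have "x i \<in> (\<Union>l'\<in>UNIV - {l}. S l')"
        using that by blast
      then show ?thesis
        unfolding V_def by (rule span_base)
    qed
    ultimately show ?thesis
      by blast
  qed
  moreover have "subspace V"
    unfolding V_def by (rule subspace_span)
  ultimately show ?thesis
    using optimal_coef_support_in_subspace[OF subsp \<open>subspace V\<close>] assms(4-6) by blast
qed

lemma optimal_coefs_common_support_same_subspace:
  fixes S :: "'l::finite \<Rightarrow> 'a::euclidean_space set" and x :: "'m::finite \<Rightarrow> 'a"
  assumes subsp: "\<And>l. subspace (S l)"
    and indep: "(\<Sum>l\<in>UNIV. dim (S l)) = dim (span (\<Union>l. S l))"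
    and covered: "\<And>i. \<exists>l. x i \<in> S l" and "x p \<noteq> 0"
    and opt_i: "optimal_coef x X i ci" and opt_j: "optimal_coef x X j cj"
    and "ci $ p \<noteq> 0" "cj $ p \<noteq> 0"
  shows "\<exists>l. x i \<in> S l \<and> x j \<in> S l"
proof -
  obtain li lj where li: "x i \<in> S li" and lj: "x j \<in> S lj"
    using covered by metis
  note support = independent_subspaces_optimal_coef_support[OF subsp indep covered]
  have "x p \<in> S li" "x p \<in> S lj"
    using support[OF li opt_i \<open>ci $ p \<noteq> 0\<close>] support[OF lj opt_j \<open>cj $ p \<noteq> 0\<close>] .
  then have "lj = li"
    using independent_subspaces_Int_eq_0[OF subsp indep] \<open>x p \<noteq> 0\<close> by blast
  with li lj show ?thesis
    by blast
qed

lemma knn_W_symmetrized_nonzero_imp_inner_pos: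
  "knn_W ct NN i j + knn_W ct NN j i \<noteq> 0 \<Longrightarrow> 0 < inner (ct i) (ct j)"
  unfolding knn_W_def by (auto simp: inner_commute split: if_splits)

lemma inner_vec_nonzero_common_support:
  fixes c d :: "real^'n"
  assumes "inner c d \<noteq> 0"
  obtains p where "c $ p \<noteq> 0" "d $ p \<noteq> 0"
proof -
  have "(\<Sum>p\<in>UNIV. c $ p * d $ p) \<noteq> 0"
    using assms by (simp add: inner_vec_def)
  then obtain p where "c $ p * d $ p \<noteq> 0"
    using sum.not_neutral_contains_not_neutral by blast
  then show ?thesis
    by (intro that) auto
qed

theorem theorem4:
  fixes S :: "'l::finite \<Rightarrow> 'a::euclidean_space set"
    and x :: "'m::finite \<Rightarrow> 'a"
    and k t :: nat
    and X0 :: "nat \<Rightarrow> 'm set"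
  assumes subsp: "\<forall>l. subspace (S l)"
    and indep: "(\<Sum>l\<in>UNIV. dim (S l)) = dim (span (\<Union>l. S l))"
    and distinct: "inj x"
    and unit: "\<forall>j. norm (x j) = 1"
    and inunion: "\<forall>j. \<exists>l. x j \<in> S l"
    and spanning: "\<forall>l. \<exists>P. P \<subseteq> range x \<inter> S l \<and> card P \<ge> dim (S l) \<and> span P = S l"
    and k: "k \<ge> (\<Sum>l\<in>UNIV. dim (S l))"
    and t: "t > 0"
    and run: "ffs_run x k X0"
  shows "(\<forall>j. \<exists>c. optimal_coef x (X0 k) j c) \<and>
         (\<forall>C NN. (\<forall>j. optimal_coef x (X0 k) j (C j)) \<and>
                 (\<forall>i. is_tNN (\<lambda>j. C j /\<^sub>R norm (C j)) t i (NN i)) \<longrightarrow>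
            (\<forall>i j. knn_W (\<lambda>j. C j /\<^sub>R norm (C j)) NN i j
                   + knn_W (\<lambda>j. C j /\<^sub>R norm (C j)) NN j i \<noteq> 0
                   \<longrightarrow> (\<exists>l. x i \<in> S l \<and> x j \<in> S l)))"
proof (intro conjI allI impI)
  have nz: "\<forall>j. x j \<noteq> 0"
    using unit by (metis norm_zero zero_neq_one)
  have "range x \<subseteq> (\<Union>l. S l)"
    using inunion by blast
  then have "dim (range x) \<le> dim (span (\<Union>l. S l))"
    by (simp add: dim_subset)
  with indep k have "dim (range x) \<le> k"
    by simp
  then have "range x \<subseteq> span (x ` X0 k)"
    using ffs_run_spans_data[OF run nz] by blast
  then show "\<exists>c. optimal_coef x (X0 k) j c" for j
    using optimal_coef_exists by blast
  fix C NN i j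
  assume "(\<forall>j. optimal_coef x (X0 k) j (C j)) \<and> (\<forall>i. is_tNN (\<lambda>j. C j /\<^sub>R norm (C j)) t i (NN i))"
  then have opt: "optimal_coef x (X0 k) j (C j)" for j
    by blast
  assume "knn_W (\<lambda>j. C j /\<^sub>R norm (C j)) NN i j + knn_W (\<lambda>j. C j /\<^sub>R norm (C j)) NN j i \<noteq> 0"
  then have "inner (C i) (C j) \<noteq> 0"
    using knn_W_symmetrized_nonzero_imp_inner_pos by fastforce
  then obtain p where "C i $ p \<noteq> 0" "C j $ p \<noteq> 0"
    by (rule inner_vec_nonzero_common_support)
  then show "\<exists>l. x i \<in> S l \<and> x j \<in> S l"
    by (rule optimal_coefs_common_support_same_subspace
        [OF subsp[rule_format] indep inunion[rule_format] nz[rule_format] opt opt])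
qed

end
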